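(* (a) For every metric space $(X,d)$, every Banach contraction $T: X\to X$ is a PA-contraction. (b) There exist a metric space $(X,d)$ and a mapping $T: X \to X$ that is a PA-contraction but not a Banach contraction. Consequently, the class of PA-contractions strictly contains the class of Banach contractions.
   Context: $T^0$ denotes the identity and $T^{k+1}=T\circ T^k$. A mapping $T: X\to X$ on a metric space $(X,d)$ is a Banach contraction if there exists $\beta\in(0,1)$ with $d(Tx,Ty)\le \beta\, d(x,y)$ for all $x,y\in X$. It is a PA-contraction if there exist $\alpha\in(0,1)$ and $N\in\mathbb{N}$ such that for all $x,y\in X$ and all $n\ge N$, $\sum_{k=0}^{n-1} d(T^{k+1}x, T^{k+1}y) \le \alpha \sum_{k=0}^{n-1} d(T^k x, T^k y)$. *)

theory Defs
  imports "HOL-Analysis.Abstract_Metric_Spaces"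
begin

definition banach_contraction :: "'a set \<Rightarrow> ('a \<Rightarrow> 'a \<Rightarrow> real) \<Rightarrow> ('a \<Rightarrow> 'a) \<Rightarrow> bool" where
  "banach_contraction X d T \<longleftrightarrow>
     (\<exists>\<beta>. 0 < \<beta> \<and> \<beta> < 1 \<and> (\<forall>x\<in>X. \<forall>y\<in>X. d (T x) (T y) \<le> \<beta> * d x y))"

definition PA_contraction :: "'a set \<Rightarrow> ('a \<Rightarrow> 'a \<Rightarrow> real) \<Rightarrow> ('a \<Rightarrow> 'a) \<Rightarrow> bool" where
  "PA_contraction X d T \<longleftrightarrow>
     (\<exists>\<alpha> (N::nat). 0 < \<alpha> \<and> \<alpha> < 1 \<and>
        (\<forall>x\<in>X. \<forall>y\<in>X. \<forall>n\<ge>N.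
           (\<Sum>k<n. d ((T ^^ (k+1)) x) ((T ^^ (k+1)) y)) \<le> \<alpha> * (\<Sum>k<n. d ((T ^^ k) x) ((T ^^ k) y))))"

end

theory Submission
  imports Defs
begin

(* A Banach contraction with constant \<beta> satisfies the PA condition termwise, with \<alpha> = \<beta> and N = 0.
   Conversely, a map whose second iterate is constant makes all terms beyond k = 1 vanish, so the
   PA condition only involves d(Tx,Ty) \<le> \<alpha> (d(x,y) + d(Tx,Ty)); this allows T to expand distances.
   On {0,1,3} the map 0 \<mapsto> 1, 1 \<mapsto> 3, 3 \<mapsto> 3 doubles d(0,1) but satisfies this with \<alpha> = 3/4. *)

lemma funpow_in_invariant_set: "T ` X \<subseteq> X \<Longrightarrow> x \<in> X \<Longrightarrow> (T ^^ k) x \<in> X"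
  by (induction k) auto

lemma funpow_eq_mono:
  fixes T :: "'a \<Rightarrow> 'a"
  assumes "(T ^^ m) x = (T ^^ m) y" "m \<le> k"
  shows "(T ^^ k) x = (T ^^ k) y"
proof -
  have "T ^^ k = T ^^ (k - m) \<circ> T ^^ m"
    using assms(2) by (simp flip: funpow_add)
  then show ?thesis
    using assms(1) by simp
qed

lemma banach_contraction_imp_PA_contraction:
  assumes "T ` X \<subseteq> X" "banach_contraction X d T"
  shows "PA_contraction X d T"
proof -
  obtain \<beta> where \<beta>: "0 < \<beta>" "\<beta> < 1" and contr: "\<forall>x\<in>X. \<forall>y\<in>X. d (T x) (T y) \<le> \<beta> * d x y"
    using assms(2) unfolding banach_contraction_def by blast
  show ?thesis unfolding PA_contraction_def
  proof (intro exI[of _ \<beta>] exI[of _ 0] conjI \<beta> ballI allI impI)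
    fix x y n assume "x \<in> X" "y \<in> X"
    then have "d ((T ^^ (k+1)) x) ((T ^^ (k+1)) y) \<le> \<beta> * d ((T ^^ k) x) ((T ^^ k) y)" for k
      using contr funpow_in_invariant_set[OF assms(1)] by simp
    then show "(\<Sum>k<n. d ((T ^^ (k+1)) x) ((T ^^ (k+1)) y)) \<le> \<beta> * (\<Sum>k<n. d ((T ^^ k) x) ((T ^^ k) y))"
      by (simp add: sum_distrib_left sum_mono)
  qed
qed

lemma (in Metric_space) banach_contraction_nonexpansive:
  assumes "banach_contraction M d T" "x \<in> M" "y \<in> M"
  shows "d (T x) (T y) \<le> d x y"
proof -
  obtain \<beta> where "0 < \<beta>" "\<beta> < 1" "d (T x) (T y) \<le> \<beta> * d x y"
    using assms unfolding banach_contraction_def by blast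
  moreover have "\<beta> * d x y \<le> d x y"
    using \<open>0 < \<beta>\<close> \<open>\<beta> < 1\<close> nonneg[of x y] by (simp add: mult_left_le_one_le)
  ultimately show ?thesis
    by linarith
qed

lemma (in Metric_space) PA_contraction_if_funpow_constant:
  assumes "T ` M \<subseteq> M" and const: "\<forall>x\<in>M. \<forall>y\<in>M. (T ^^ m) x = (T ^^ m) y"
    and "0 < \<alpha>" "\<alpha> < 1"
    and initial: "\<forall>x\<in>M. \<forall>y\<in>M.
      (\<Sum>k<m. d ((T ^^ (k+1)) x) ((T ^^ (k+1)) y)) \<le> \<alpha> * (\<Sum>k<m. d ((T ^^ k) x) ((T ^^ k) y))"
  shows "PA_contraction M d T"
  unfolding PA_contraction_def
proof (intro exI[of _ \<alpha>] exI[of _ m] conjI \<open>0 < \<alpha>\<close> \<open>\<alpha> < 1\<close> ballI allI impI)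
  fix x y n assume xy: "x \<in> M" "y \<in> M" and "m \<le> n"
  have tail: "d ((T ^^ k) x) ((T ^^ k) y) = 0" if "m \<le> k" for k
    using funpow_eq_mono[OF const[rule_format, OF xy] that] funpow_in_invariant_set[OF assms(1)] xy
    by simp
  have "(\<Sum>k<n. d ((T ^^ (k+1)) x) ((T ^^ (k+1)) y)) = (\<Sum>k<m. d ((T ^^ (k+1)) x) ((T ^^ (k+1)) y))"
    using \<open>m \<le> n\<close> by (intro sum.mono_neutral_right) (auto intro!: tail simp del: funpow.simps)
  also have "\<dots> \<le> \<alpha> * (\<Sum>k<m. d ((T ^^ k) x) ((T ^^ k) y))"
    using initial xy by blast
  also have "(\<Sum>k<m. d ((T ^^ k) x) ((T ^^ k) y)) = (\<Sum>k<n. d ((T ^^ k) x) ((T ^^ k) y))"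
    using \<open>m \<le> n\<close> tail by (intro sum.mono_neutral_left) auto
  finally show "(\<Sum>k<n. d ((T ^^ (k+1)) x) ((T ^^ (k+1)) y)) \<le> \<alpha> * (\<Sum>k<n. d ((T ^^ k) x) ((T ^^ k) y))" .
qed

definition collapse_map :: "real \<Rightarrow> real" where
  "collapse_map x = (if x = 0 then 1 else 3)"

lemma collapse_map_PA_not_banach:
  "Metric_space {0,1,3::real} dist \<and> collapse_map ` {0,1,3} \<subseteq> {0,1,3} \<and>
   PA_contraction {0,1,3} dist collapse_map \<and> \<not> banach_contraction {0,1,3} dist collapse_map"
proof (intro conjI)
  show space: "Metric_space {0,1,3::real} dist"
    unfolding Metric_space_def by (auto simp: dist_commute dist_triangle)
  show invariant: "collapse_map ` {0,1,3} \<subseteq> {0,1,3}"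
    by (auto simp: collapse_map_def)
  show "\<not> banach_contraction {0,1,3} dist collapse_map"
    using Metric_space.banach_contraction_nonexpansive[OF space, of collapse_map 0 1]
    by (auto simp: collapse_map_def dist_real_def)
  show "PA_contraction {0,1,3} dist collapse_map"
    by (rule Metric_space.PA_contraction_if_funpow_constant[OF space invariant, where m = 2 and \<alpha> = "3/4"])
      (auto simp: collapse_map_def dist_real_def numeral_2_eq_2)
qed

theorem theorem2:
  shows "(\<forall>(X :: 'a set) d (T :: 'a \<Rightarrow> 'a).
            Metric_space X d \<and> T ` X \<subseteq> X \<and> banach_contraction X d T \<longrightarrow> PA_contraction X d T)
       \<and> (\<exists>(X :: real set) d (T :: real \<Rightarrow> real).
            Metric_space X d \<and> T ` X \<subseteq> X \<and> PA_contraction X d T \<and> \<not> banach_contraction X d T)"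
  using banach_contraction_imp_PA_contraction collapse_map_PA_not_banach by blast

end
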